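(* Let $G$ be a finite claw-free graph. Then its modular decomposition tree $T(G)$ has at most 5 layers, i.e. every path from the root to a leaf contains at most 5 nodes (the root being in layer 1).
   Context: A claw is an induced subgraph isomorphic to $K_{1,3}$. A module of $G=(V,E)$ is a set $M\subseteq V$ such that every vertex outside $M$ is adjacent either to all or to none of $M$. A graph is prime if it has at least 4 vertices and only the modules $\emptyset$, singletons and $V$. Modular decomposition (Gallai): exactly one holds: (single) $G$ is one vertex; (parallel) $G$ is disconnected; (serial) the complement of $G$ is disconnected; (prime) $G$ and its complement are connected, $|V|\ge4$, and the maximal proper modules partition $V$ into $P$ with $G/P$ prime. The tree $T(G)$ is defined recursively: single case a leaf; parallel case a root labelled "parallel" with children $T(G[C])$ for the connected components $C$ of $G$; serial case a root labelled "serial" with children $T(G[C])$ for the connected components $C$ of the complement; prime case a root labelled "prime" with children $T(G[M])$, $M\in P$. *)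

theory Defs
  imports Main
begin

text \<open>A finite simple graph is given by a finite vertex set V and a symmetric,
irreflexive adjacency relation E; induced subgraphs G[S] are obtained by
restricting E to S.\<close>

definition simple_graph :: "'a set \<Rightarrow> ('a \<Rightarrow> 'a \<Rightarrow> bool) \<Rightarrow> bool" where
  "simple_graph V E \<longleftrightarrow> finite V \<and> (\<forall>x y. E x y \<longrightarrow> E y x) \<and> (\<forall>x. \<not> E x x)"

definition claw_free :: "'a set \<Rightarrow> ('a \<Rightarrow> 'a \<Rightarrow> bool) \<Rightarrow> bool" where
  "claw_free V E \<longleftrightarrow> \<not> (\<exists>c\<in>V. \<exists>a\<in>V. \<exists>b\<in>V. \<exists>d\<in>V.
      distinct [c, a, b, d] \<and> E c a \<and> E c b \<and> E c d \<and>
      \<not> E a b \<and> \<not> E a d \<and> \<not> E b d)"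

definition compl_rel :: "('a \<Rightarrow> 'a \<Rightarrow> bool) \<Rightarrow> 'a \<Rightarrow> 'a \<Rightarrow> bool" where
  "compl_rel E x y \<longleftrightarrow> x \<noteq> y \<and> \<not> E x y"

definition edges_on :: "('a \<Rightarrow> 'a \<Rightarrow> bool) \<Rightarrow> 'a set \<Rightarrow> ('a \<times> 'a) set" where
  "edges_on E S = {(u, v). u \<in> S \<and> v \<in> S \<and> E u v}"

definition connected_on :: "('a \<Rightarrow> 'a \<Rightarrow> bool) \<Rightarrow> 'a set \<Rightarrow> bool" where
  "connected_on E S \<longleftrightarrow> S \<noteq> {} \<and> (\<forall>x\<in>S. \<forall>y\<in>S. (x, y) \<in> (edges_on E S)\<^sup>*)"

definition component_of :: "('a \<Rightarrow> 'a \<Rightarrow> bool) \<Rightarrow> 'a set \<Rightarrow> 'a set \<Rightarrow> bool" where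
  "component_of E S C \<longleftrightarrow> (\<exists>x\<in>S. C = {y \<in> S. (x, y) \<in> (edges_on E S)\<^sup>*})"

definition module_of :: "('a \<Rightarrow> 'a \<Rightarrow> bool) \<Rightarrow> 'a set \<Rightarrow> 'a set \<Rightarrow> bool" where
  "module_of E S M \<longleftrightarrow> M \<subseteq> S \<and>
     (\<forall>v\<in>S - M. (\<forall>m\<in>M. E v m) \<or> (\<forall>m\<in>M. \<not> E v m))"

definition max_proper_module :: "('a \<Rightarrow> 'a \<Rightarrow> bool) \<Rightarrow> 'a set \<Rightarrow> 'a set \<Rightarrow> bool" where
  "max_proper_module E S M \<longleftrightarrow> module_of E S M \<and> M \<noteq> S \<and>
     (\<forall>M'. module_of E S M' \<and> M' \<noteq> S \<and> M \<subseteq> M' \<longrightarrow> M' = M)"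

text \<open>md_child E S C: the node T(G[C]) is a child of the root of T(G[S]) in the
modular decomposition tree (parallel, serial and prime case respectively;
a single vertex is a leaf and has no children).\<close>
definition md_child :: "('a \<Rightarrow> 'a \<Rightarrow> bool) \<Rightarrow> 'a set \<Rightarrow> 'a set \<Rightarrow> bool" where
  "md_child E S C \<longleftrightarrow>
     (card S \<ge> 2 \<and> \<not> connected_on E S \<and> component_of E S C) \<or>
     (card S \<ge> 2 \<and> connected_on E S \<and> \<not> connected_on (compl_rel E) S \<and>
        component_of (compl_rel E) S C) \<or>
     (card S \<ge> 4 \<and> connected_on E S \<and> connected_on (compl_rel E) S \<and>
        max_proper_module E S C)"

text \<open>A root-to-node path in T(G), G = (V,E), listed by the vertex sets of the nodes.\<close>
definition md_path :: "'a set \<Rightarrow> ('a \<Rightarrow> 'a \<Rightarrow> bool) \<Rightarrow> 'a set list \<Rightarrow> bool" where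
  "md_path V E ps \<longleftrightarrow> ps \<noteq> [] \<and> hd ps = V \<and>
     (\<forall>i. Suc i < length ps \<longrightarrow> md_child E (ps ! i) (ps ! Suc i))"

end

theory Submission
  imports Defs
begin

text \<open>Claw-freeness forces almost every node of T(G) to be a clique. If G[S] and its
complement are both connected, a proper module M with a non-edge a b yields a claw: walking
in the complement out of M reaches a vertex anticomplete to M, and walking in G from M into
the set of such vertices crosses an edge u z with u outside M, hence complete to M; then
u, a, b, z is a claw. Likewise, if a co-component A of a serial node is disconnected, a vertex
outside A is adjacent to all of A, and it is the centre of a claw unless every component of
G[A] is a clique. A clique has depth at most 2, so prime nodes have depth at most 3, serial
nodes at most 4 and the root at most 5.\<close>

definition md_depth_le :: "('a \<Rightarrow> 'a \<Rightarrow> bool) \<Rightarrow> 'a set \<Rightarrow> nat \<Rightarrow> bool" where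
  "md_depth_le E S k \<longleftrightarrow> (\<forall>ps. md_path S E ps \<longrightarrow> length ps \<le> k)"

definition clique :: "('a \<Rightarrow> 'a \<Rightarrow> bool) \<Rightarrow> 'a set \<Rightarrow> bool" where
  "clique E S \<longleftrightarrow> (\<forall>a\<in>S. \<forall>b\<in>S. a \<noteq> b \<longrightarrow> E a b)"

lemma md_path_Cons_Cons:
  "md_path S E (S # C # ps) \<longleftrightarrow> md_child E S C \<and> md_path C E (C # ps)"
  unfolding md_path_def by (auto simp: All_less_Suc2)

lemma md_depth_le_SucI:
  assumes "\<And>C. md_child E S C \<Longrightarrow> md_depth_le E C k"
  shows "md_depth_le E S (Suc k)"
  unfolding md_depth_le_def
proof (intro allI impI)
  fix ps assume path: "md_path S E ps"
  then obtain qs where ps: "ps = S # qs"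
    unfolding md_path_def by (metis list.collapse)
  show "length ps \<le> Suc k"
  proof (cases qs)
    case Nil
    then show ?thesis using ps by simp
  next
    case (Cons C rs)
    then have "md_child E S C" "md_path C E (C # rs)"
      using path ps md_path_Cons_Cons by auto
    then show ?thesis using assms ps Cons unfolding md_depth_le_def by fastforce
  qed
qed

lemma md_depth_le_mono: "md_depth_le E S k \<Longrightarrow> k \<le> m \<Longrightarrow> md_depth_le E S m"
  unfolding md_depth_le_def by fastforce

lemma connected_on_crossing_edge:
  assumes "connected_on R S" "x \<in> S \<inter> X" "y \<in> S - X"
  shows "\<exists>u\<in>S \<inter> X. \<exists>z\<in>S - X. R u z"
proof -
  have "(x, y) \<in> (edges_on R S)\<^sup>*"
    using assms unfolding connected_on_def by blast
  then show ?thesis using assms(2,3)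
  proof (induction rule: rtrancl_induct)
    case (step y z)
    then show ?case unfolding edges_on_def by (cases "y \<in> X") auto
  qed simp
qed

lemma component_of_subset: "component_of R S C \<Longrightarrow> C \<subseteq> S"
  unfolding component_of_def by blast

lemma component_of_closed:
  assumes "component_of R S C" "c \<in> C" "d \<in> S" "R c d"
  shows "d \<in> C"
  using assms unfolding component_of_def edges_on_def
  by (auto intro: rtrancl_into_rtrancl)

lemma connected_on_component:
  assumes sym: "\<And>x y. R x y \<Longrightarrow> R y x" and C: "component_of R S C"
  shows "connected_on R C"
proof -
  obtain x where x: "x \<in> S" "C = {y \<in> S. (x, y) \<in> (edges_on R S)\<^sup>*}"
    using C unfolding component_of_def by blast
  have reach: "(x, y) \<in> (edges_on R C)\<^sup>*" if "y \<in> C" for y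
  proof -
    have "(x, y) \<in> (edges_on R S)\<^sup>*" using that x by simp
    then show ?thesis using that
    proof (induction rule: rtrancl_induct)
      case (step y z)
      then have "y \<in> C" using x unfolding edges_on_def by blast
      with step show ?case unfolding edges_on_def by (blast intro: rtrancl_into_rtrancl)
    qed simp
  qed
  have "sym (edges_on R C)"
    using sym unfolding edges_on_def sym_def by blast
  then have "sym ((edges_on R C)\<^sup>*)" by (rule sym_rtrancl)
  then have "(a, b) \<in> (edges_on R C)\<^sup>*" if "a \<in> C" "b \<in> C" for a b
    using reach[OF that(1)] reach[OF that(2)] by (blast dest: symD intro: rtrancl_trans)
  moreover have "x \<in> C" using x by simp
  ultimately show ?thesis unfolding connected_on_def by blast
qed

lemma component_of_psubset:
  assumes "\<And>x y. R x y \<Longrightarrow> R y x" "component_of R S C" "\<not> connected_on R S"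
  shows "\<exists>d\<in>S. d \<notin> C"
proof (rule ccontr)
  assume "\<not> ?thesis"
  then have "C = S" using component_of_subset[OF assms(2)] by blast
  then show False using connected_on_component[OF assms(1,2)] assms(3) by simp
qed

lemma clique_md_depth_le_2:
  assumes "clique E S"
  shows "md_depth_le E S 2"
proof -
  have no_coedges: "edges_on (compl_rel E) S = {}"
    using assms unfolding edges_on_def compl_rel_def clique_def by blast
  have two: "\<exists>a\<in>S. \<exists>b\<in>S. a \<noteq> b" if "card S \<ge> 2"
  proof -
    have "finite S" "\<not> card S \<le> Suc 0" using that card.infinite by force+
    then show ?thesis using card_le_Suc0_iff_eq by blast
  qed
  have connected: "connected_on E S" if "card S \<ge> 2"
  proof -
    have "(a, b) \<in> (edges_on E S)\<^sup>*" if "a \<in> S" "b \<in> S" for a b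
      using assms that unfolding clique_def edges_on_def by (cases "a = b") auto
    then show ?thesis using two[OF \<open>card S \<ge> 2\<close>] unfolding connected_on_def by blast
  qed
  have not_coconnected: "\<not> connected_on (compl_rel E) S" if "card S \<ge> 2"
    using two[OF that] no_coedges unfolding connected_on_def by auto
  have "card C \<le> 1" if "md_child E S C" for C
    using that unfolding md_child_def
  proof (elim disjE conjE)
    assume "component_of (compl_rel E) S C"
    then obtain x where "C = {y \<in> S. (x, y) \<in> (edges_on (compl_rel E) S)\<^sup>*}"
      unfolding component_of_def by blast
    then have "C \<subseteq> {x}" using no_coedges by auto
    then show ?thesis using card_mono[of "{x}" C] by simp
  next
    assume "card S \<ge> 2" "\<not> connected_on E S"
    then show ?thesis using connected by blast
  next
    assume "card S \<ge> 4" "connected_on (compl_rel E) S"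
    then show ?thesis using not_coconnected by simp
  qed
  moreover have "md_depth_le E C 1" if "card C \<le> 1" for C
    using md_depth_le_SucI[of E C 0] that unfolding md_child_def by simp
  ultimately show ?thesis
    using md_depth_le_SucI[of E S 1] by (simp add: numeral_2_eq_2)
qed

lemma simple_graph_sym: "simple_graph V E \<Longrightarrow> E x y \<Longrightarrow> E y x"
  unfolding simple_graph_def by blast

lemma compl_rel_sym: "(\<And>x y. E x y \<Longrightarrow> E y x) \<Longrightarrow> compl_rel E x y \<Longrightarrow> compl_rel E y x"
  unfolding compl_rel_def by blast

lemma claw_free_private_neighbours_clique:
  assumes graph: "simple_graph V E" and claw_free: "claw_free V E"
    and "M \<subseteq> V" "u \<in> V" "z \<in> V - M" "E u z"
    and complete: "\<forall>m\<in>M. E u m" and anticomplete: "\<forall>m\<in>M. \<not> E z m"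
  shows "clique E M"
  unfolding clique_def
proof (intro ballI impI, rule ccontr)
  fix a b assume a: "a \<in> M" and b: "b \<in> M" and "a \<noteq> b" "\<not> E a b"
  have "u \<notin> M" using \<open>E u z\<close> anticomplete simple_graph_sym[OF graph] by blast
  moreover have "u \<noteq> z" using \<open>E u z\<close> graph unfolding simple_graph_def by blast
  ultimately have "distinct [u, a, b, z]" using a b \<open>a \<noteq> b\<close> \<open>z \<in> V - M\<close> by auto
  moreover have "\<not> E a z" "\<not> E b z"
    using a b anticomplete simple_graph_sym[OF graph] by blast+
  moreover have "E u a" "E u b" using a b complete by blast+
  moreover have "a \<in> V" "b \<in> V" using a b \<open>M \<subseteq> V\<close> by blast+
  ultimately show False
    using claw_free \<open>\<not> E a b\<close> \<open>E u z\<close> \<open>u \<in> V\<close> \<open>z \<in> V - M\<close>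
    unfolding claw_free_def by blast
qed

lemma prime_proper_module_clique:
  assumes graph: "simple_graph V E" and claw_free: "claw_free V E" and "S \<subseteq> V"
    and connected: "connected_on E S" and coconnected: "connected_on (compl_rel E) S"
    and module: "module_of E S M" and "M \<noteq> S"
  shows "clique E M"
proof (cases "M = {}")
  case True
  then show ?thesis by (simp add: clique_def)
next
  case False
  then obtain a where a: "a \<in> M" by blast
  have "M \<subseteq> S" and homogeneous: "\<And>v. v \<in> S - M \<Longrightarrow> (\<forall>m\<in>M. E v m) \<or> (\<forall>m\<in>M. \<not> E v m)"
    using module unfolding module_of_def by blast+
  define A where "A = {z \<in> S - M. \<forall>m\<in>M. \<not> E z m}"
  obtain y where "y \<in> S - M" using \<open>M \<subseteq> S\<close> \<open>M \<noteq> S\<close> by blast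
  then obtain u0 z0 where "u0 \<in> M" "z0 \<in> S - M" "compl_rel E u0 z0"
    using connected_on_crossing_edge[OF coconnected, of a M y] a \<open>M \<subseteq> S\<close> by blast
  then have "z0 \<in> A"
    using homogeneous[of z0] simple_graph_sym[OF graph] unfolding A_def compl_rel_def by blast
  then obtain u z where u: "u \<in> S - A" and z: "z \<in> A" and "E u z"
    using connected_on_crossing_edge[OF connected, of a "S - A" z0] a \<open>M \<subseteq> S\<close>
    unfolding A_def by blast
  have "u \<notin> M"
    using z \<open>E u z\<close> simple_graph_sym[OF graph] unfolding A_def by blast
  then have "\<forall>m\<in>M. E u m" using homogeneous[of u] u unfolding A_def by blast
  moreover have "\<forall>m\<in>M. \<not> E z m" using z unfolding A_def by blast
  ultimately show ?thesis
    using claw_free_private_neighbours_clique[OF graph claw_free, of M u z]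
      \<open>M \<subseteq> S\<close> \<open>S \<subseteq> V\<close> u z \<open>E u z\<close> unfolding A_def by blast
qed

lemma claw_free_component_clique:
  assumes graph: "simple_graph V E" and claw_free: "claw_free V E" and "A \<subseteq> V"
    and "v \<in> V" and complete: "\<forall>a\<in>A. E v a"
    and "\<not> connected_on E A" and C: "component_of E A C"
  shows "clique E C"
proof -
  have sym: "\<And>x y. E x y \<Longrightarrow> E y x" using simple_graph_sym[OF graph] .
  have "C \<subseteq> A" using component_of_subset[OF C] .
  obtain d where d: "d \<in> A" "d \<notin> C"
    using component_of_psubset[OF sym C \<open>\<not> connected_on E A\<close>] by blast
  have "\<forall>c\<in>C. \<not> E d c"
    using component_of_closed[OF C _ d(1)] d(2) sym by blast
  moreover have "C \<subseteq> V" "d \<in> V - C" using \<open>C \<subseteq> A\<close> \<open>A \<subseteq> V\<close> d by auto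
  moreover have "E v d" "\<forall>c\<in>C. E v c" using complete d(1) \<open>C \<subseteq> A\<close> by auto
  ultimately show ?thesis
    using claw_free_private_neighbours_clique[OF graph claw_free] \<open>v \<in> V\<close> by blast
qed

lemma component_of_compl_rel_complete:
  assumes "\<And>x y. E x y \<Longrightarrow> E y x" and A: "component_of (compl_rel E) S A" and "v \<in> S - A"
  shows "\<forall>a\<in>A. E v a"
proof
  fix a assume "a \<in> A"
  show "E v a"
  proof (rule ccontr)
    assume "\<not> E v a"
    then have "compl_rel E a v" using assms(1) \<open>v \<in> S - A\<close> \<open>a \<in> A\<close> unfolding compl_rel_def by blast
    then show False using component_of_closed[OF A \<open>a \<in> A\<close>] \<open>v \<in> S - A\<close> by blast
  qed
qed

lemma prime_md_depth_le_3:
  assumes graph: "simple_graph V E" and claw_free: "claw_free V E" and "S \<subseteq> V"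
    and connected: "connected_on E S" and coconnected: "connected_on (compl_rel E) S"
  shows "md_depth_le E S 3"
proof -
  have "md_depth_le E C 2" if "md_child E S C" for C
  proof -
    have "max_proper_module E S C" using that connected coconnected unfolding md_child_def by blast
    then have "clique E C"
      using prime_proper_module_clique[OF graph claw_free \<open>S \<subseteq> V\<close> connected coconnected]
      unfolding max_proper_module_def by blast
    then show ?thesis by (rule clique_md_depth_le_2)
  qed
  then show ?thesis using md_depth_le_SucI[of E S 2] by simp
qed

lemma coconnected_md_depth_le_3:
  assumes graph: "simple_graph V E" and claw_free: "claw_free V E" and "S \<subseteq> V"
    and "v \<in> V" and complete: "\<forall>a\<in>S. E v a" and coconnected: "connected_on (compl_rel E) S"
  shows "md_depth_le E S 3"
proof (cases "connected_on E S")
  case True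
  then show ?thesis using prime_md_depth_le_3[OF graph claw_free \<open>S \<subseteq> V\<close> _ coconnected] by blast
next
  case False
  have "md_depth_le E C 2" if "md_child E S C" for C
  proof -
    have "component_of E S C" using that False unfolding md_child_def by blast
    then have "clique E C"
      using claw_free_component_clique[OF graph claw_free \<open>S \<subseteq> V\<close> \<open>v \<in> V\<close> complete False] by blast
    then show ?thesis by (rule clique_md_depth_le_2)
  qed
  then show ?thesis using md_depth_le_SucI[of E S 2] by simp
qed

lemma connected_md_depth_le_4:
  assumes graph: "simple_graph V E" and claw_free: "claw_free V E" and "S \<subseteq> V"
    and connected: "connected_on E S"
  shows "md_depth_le E S 4"
proof (cases "connected_on (compl_rel E) S")
  case True
  then show ?thesis
    using prime_md_depth_le_3[OF graph claw_free \<open>S \<subseteq> V\<close> connected] md_depth_le_mono by fastforce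
next
  case False
  have sym: "\<And>x y. E x y \<Longrightarrow> E y x" using simple_graph_sym[OF graph] .
  have "md_depth_le E A 3" if "md_child E S A" for A
  proof -
    have A: "component_of (compl_rel E) S A" using that connected False unfolding md_child_def by blast
    obtain v where "v \<in> S - A"
      using component_of_psubset[OF compl_rel_sym[OF sym] A False] by blast
    then show ?thesis
      using coconnected_md_depth_le_3[OF graph claw_free _ _ component_of_compl_rel_complete[OF sym A]]
        connected_on_component[OF compl_rel_sym[OF sym] A] component_of_subset[OF A] \<open>S \<subseteq> V\<close>
      by blast
  qed
  then show ?thesis using md_depth_le_SucI[of E S 3] by simp
qed

lemma md_depth_le_5:
  assumes graph: "simple_graph V E" and claw_free: "claw_free V E" and "S \<subseteq> V"
  shows "md_depth_le E S 5"
proof (cases "connected_on E S")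
  case True
  then show ?thesis
    using connected_md_depth_le_4[OF graph claw_free \<open>S \<subseteq> V\<close>] md_depth_le_mono by fastforce
next
  case False
  have "md_depth_le E C 4" if "md_child E S C" for C
  proof -
    have C: "component_of E S C" using that False unfolding md_child_def by blast
    then show ?thesis
      using connected_md_depth_le_4[OF graph claw_free _ connected_on_component[OF _ C]]
        component_of_subset[OF C] \<open>S \<subseteq> V\<close> simple_graph_sym[OF graph] by blast
  qed
  then show ?thesis using md_depth_le_SucI[of E S 4] by simp
qed

theorem corollary3:
  fixes V :: "'a set" and E :: "'a \<Rightarrow> 'a \<Rightarrow> bool"
  assumes "simple_graph V E" and "V \<noteq> {}" and "claw_free V E"
    and "md_path V E ps"
  shows "length ps \<le> 5"
  using md_depth_le_5[OF assms(1,3) order_refl] assms(4) unfolding md_depth_le_def by blast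

end
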